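(* Let $(\mathcal{S},d_S)$ and $(\mathcal{T},d_T)$ be totally bounded premetric spaces, and let $\mathcal{U}(\mathcal{S},\mathcal{T})$ be the set of metric-preserving functions $f:\mathcal{S}\to\mathcal{T}$ (i.e. $d_T(f(x),f(y))=d_S(x,y)$ for all $x,y$), equipped with $d(f,g)=\sup_{x\in\mathcal{S}}d_T(f(x),g(x))$. Then $(\mathcal{U}(\mathcal{S},\mathcal{T}),d)$ is a totally bounded premetric space.
   Context: A premetric space is a set $X$ with a function $d:X\times X\to[0,\infty)$ such that $d(x,x)=0$, $d(x,y)=d(y,x)$, and $d(x,z)\le d(x,y)+d(y,z)$ for all $x,y,z$ ($d(x,y)=0$ need not imply $x=y$). The ball $B_\epsilon(x)=\{y: d(x,y)<\epsilon\}$; the space is totally bounded if for every $\epsilon>0$ finitely many balls of radius $\epsilon$ cover it. *)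

theory Defs
  imports "HOL-Analysis.Analysis"
begin

definition premetric :: "'a set \<Rightarrow> ('a \<Rightarrow> 'a \<Rightarrow> real) \<Rightarrow> bool" where
  "premetric X d \<longleftrightarrow>
     (\<forall>x\<in>X. \<forall>y\<in>X. d x y \<ge> 0) \<and>
     (\<forall>x\<in>X. d x x = 0) \<and>
     (\<forall>x\<in>X. \<forall>y\<in>X. d x y = d y x) \<and>
     (\<forall>x\<in>X. \<forall>y\<in>X. \<forall>z\<in>X. d x z \<le> d x y + d y z)"

definition pball :: "'a set \<Rightarrow> ('a \<Rightarrow> 'a \<Rightarrow> real) \<Rightarrow> 'a \<Rightarrow> real \<Rightarrow> 'a set" where
  "pball X d x e = {y\<in>X. d x y < e}"

definition ptotally_bounded :: "'a set \<Rightarrow> ('a \<Rightarrow> 'a \<Rightarrow> real) \<Rightarrow> bool" where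
  "ptotally_bounded X d \<longleftrightarrow>
     (\<forall>e>0. \<exists>F. finite F \<and> F \<subseteq> X \<and> X \<subseteq> (\<Union>x\<in>F. pball X d x e))"

definition metric_preserving_maps ::
  "'a set \<Rightarrow> ('a \<Rightarrow> 'a \<Rightarrow> real) \<Rightarrow> 'b set \<Rightarrow> ('b \<Rightarrow> 'b \<Rightarrow> real) \<Rightarrow> ('a \<Rightarrow> 'b) set" where
  "metric_preserving_maps S dS T dT =
     {f \<in> S \<rightarrow>\<^sub>E T. \<forall>x\<in>S. \<forall>y\<in>S. dT (f x) (f y) = dS x y}"

text \<open>Sup distance; the 0 makes the empty-domain case well-defined (sup of the empty
set of nonnegative reals is 0) and does not change the value otherwise.\<close>
definition sup_dist :: "'a set \<Rightarrow> ('b \<Rightarrow> 'b \<Rightarrow> real) \<Rightarrow> ('a \<Rightarrow> 'b) \<Rightarrow> ('a \<Rightarrow> 'b) \<Rightarrow> real" where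
  "sup_dist S dT f g = Sup (insert 0 ((\<lambda>x. dT (f x) (g x)) ` S))"

end

theory Submission
  imports Defs
begin

text \<open>Total boundedness of T makes all distances bounded, so the supremum distance is a
genuine supremum. For total boundedness, fix finite \<open>\<epsilon>\<close>-nets \<open>N\<^sub>S\<close> of S and \<open>N\<^sub>T\<close> of T and
classify an isometry f by the set of pairs \<open>(s, t) \<in> N\<^sub>S \<times> N\<^sub>T\<close> with \<open>d\<^sub>T(t, f s) < \<epsilon>\<close>.
There are finitely many classes, and two isometries in one class are within \<open>2\<epsilon>\<close> on \<open>N\<^sub>S\<close>,
hence, being isometries, within \<open>4\<epsilon>\<close> everywhere.\<close>

lemma premetric_triangle:
  assumes "premetric X d" "x \<in> X" "y \<in> X" "z \<in> X"
  shows "d x z \<le> d x y + d y z"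
  using assms unfolding premetric_def by blast

lemma premetric_sym:
  assumes "premetric X d" "x \<in> X" "y \<in> X"
  shows "d x y = d y x"
  using assms unfolding premetric_def by blast

lemma ptotally_bounded_imp_bounded:
  assumes pm: "premetric T d" and tb: "ptotally_bounded T d"
  obtains B where "\<And>a b. a \<in> T \<Longrightarrow> b \<in> T \<Longrightarrow> d a b \<le> B"
proof -
  obtain F where F: "finite F" "F \<subseteq> T" "T \<subseteq> (\<Union>x\<in>F. pball T d x 1)"
    using tb unfolding ptotally_bounded_def by (meson zero_less_one)
  define M where "M = (\<Sum>p\<in>F\<times>F. d (fst p) (snd p))"
  have "d a b \<le> 2 + M" if a: "a \<in> T" and b: "b \<in> T" for a b
  proof -
    obtain t where t: "t \<in> F" "d t a < 1" using F(3) a unfolding pball_def by blast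
    obtain s where s: "s \<in> F" "d s b < 1" using F(3) b unfolding pball_def by blast
    have tT: "t \<in> T" and sT: "s \<in> T" using t s F(2) by auto
    have "d t s \<le> M" unfolding M_def
      using member_le_sum[of "(t,s)" "F\<times>F" "\<lambda>p. d (fst p) (snd p)"] F(1,2) t s pm
      unfolding premetric_def by (auto simp: subset_iff)
    moreover have "d a b \<le> d a t + d t s + d s b"
      using premetric_triangle[OF pm a tT b] premetric_triangle[OF pm tT sT b] by linarith
    moreover have "d a t = d t a" using premetric_sym[OF pm a tT] .
    ultimately show ?thesis using t s by linarith
  qed
  then show ?thesis by (rule that)
qed

lemma sup_dist_upper:
  assumes "bdd_above ((\<lambda>x. dT (f x) (g x)) ` S)" "x \<in> S"
  shows "dT (f x) (g x) \<le> sup_dist S dT f g"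
  unfolding sup_dist_def using assms by (intro cSup_upper) auto

lemma sup_dist_nonneg:
  assumes "bdd_above ((\<lambda>x. dT (f x) (g x)) ` S)"
  shows "0 \<le> sup_dist S dT f g"
  unfolding sup_dist_def using assms by (intro cSup_upper) auto

lemma sup_dist_le:
  assumes "0 \<le> z" "\<And>x. x \<in> S \<Longrightarrow> dT (f x) (g x) \<le> z"
  shows "sup_dist S dT f g \<le> z"
  unfolding sup_dist_def using assms by (intro cSup_least) auto

lemma premetric_sup_dist:
  assumes pm: "premetric T dT" and B: "\<And>a b. a \<in> T \<Longrightarrow> b \<in> T \<Longrightarrow> dT a b \<le> B"
    and U: "U \<subseteq> S \<rightarrow> T"
  shows "premetric U (sup_dist S dT)"
proof -
  have inT: "f x \<in> T" if "f \<in> U" "x \<in> S" for f x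
    using that U by blast
  have bdd: "bdd_above ((\<lambda>x. dT (f x) (g x)) ` S)" if "f \<in> U" "g \<in> U" for f g
    using B inT that by (intro bdd_aboveI[of _ B]) blast
  have nonneg: "0 \<le> sup_dist S dT f g" if "f \<in> U" "g \<in> U" for f g
    using sup_dist_nonneg[of dT f g S] bdd[OF that] .
  have upper: "dT (f x) (g x) \<le> sup_dist S dT f g" if "f \<in> U" "g \<in> U" "x \<in> S" for f g x
    using sup_dist_upper[of dT f g S x] bdd[OF that(1,2)] that(3) by simp
  show ?thesis
    unfolding premetric_def
  proof (intro conjI ballI)
    fix f g assume f: "f \<in> U" and g: "g \<in> U"
    show "0 \<le> sup_dist S dT f g" using nonneg[OF f g] .
    show "sup_dist S dT f g = sup_dist S dT g f"
      unfolding sup_dist_def using premetric_sym[OF pm] inT[OF f] inT[OF g]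
      by (intro arg_cong[where f=Sup] arg_cong[where f="insert 0"] image_cong) auto
  next
    fix f assume f: "f \<in> U"
    have "dT (f x) (f x) = 0" if "x \<in> S" for x
      using pm inT[OF f that] unfolding premetric_def by blast
    then have "sup_dist S dT f f \<le> 0" by (intro sup_dist_le) auto
    then show "sup_dist S dT f f = 0" using nonneg[OF f f] by linarith
  next
    fix f g h assume f: "f \<in> U" and g: "g \<in> U" and h: "h \<in> U"
    show "sup_dist S dT f h \<le> sup_dist S dT f g + sup_dist S dT g h"
    proof (rule sup_dist_le)
      show "0 \<le> sup_dist S dT f g + sup_dist S dT g h"
        using nonneg[OF f g] nonneg[OF g h] by linarith
    next
      fix x assume x: "x \<in> S"
      show "dT (f x) (h x) \<le> sup_dist S dT f g + sup_dist S dT g h"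
        using premetric_triangle[OF pm inT[OF f x] inT[OF g x] inT[OF h x]]
          upper[OF f g x] upper[OF g h x] by linarith
    qed
  qed
qed

lemma finite_net_from_finite_classification:
  assumes "finite (c ` U)" and "\<And>f g. f \<in> U \<Longrightarrow> g \<in> U \<Longrightarrow> c f = c g \<Longrightarrow> d g f < e"
  shows "\<exists>F. finite F \<and> F \<subseteq> U \<and> U \<subseteq> (\<Union>x\<in>F. pball U d x e)"
proof (intro exI conjI)
  show "finite (inv_into U c ` c ` U)" using assms(1) by simp
  show "inv_into U c ` c ` U \<subseteq> U" by (auto intro: inv_into_into)
  show "U \<subseteq> (\<Union>x\<in>inv_into U c ` c ` U. pball U d x e)"
  proof
    fix f assume f: "f \<in> U"
    have "d (inv_into U c (c f)) f < e"
      using assms(2)[OF f inv_into_into[of "c f" c U]] f by (simp add: f_inv_into_f)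
    then show "f \<in> (\<Union>x\<in>inv_into U c ` c ` U. pball U d x e)"
      using f unfolding pball_def by blast
  qed
qed

lemma metric_preserving_sup_dist_le:
  assumes pm: "premetric T dT"
    and f: "f \<in> metric_preserving_maps S dS T dT" and g: "g \<in> metric_preserving_maps S dS T dT"
    and net: "N \<subseteq> S" "S \<subseteq> (\<Union>s\<in>N. pball S dS s r)"
    and close: "\<And>s. s \<in> N \<Longrightarrow> dT (g s) (f s) \<le> \<delta>" and "0 \<le> r" "0 \<le> \<delta>"
  shows "sup_dist S dT g f \<le> 2 * r + \<delta>"
proof (rule sup_dist_le)
  show "0 \<le> 2 * r + \<delta>" using assms by simp
next
  have inT: "h x \<in> T" if "h \<in> metric_preserving_maps S dS T dT" "x \<in> S" for h x
    using that unfolding metric_preserving_maps_def by auto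
  have pres: "dT (h x) (h y) = dS x y"
    if "h \<in> metric_preserving_maps S dS T dT" "x \<in> S" "y \<in> S" for h x y
    using that unfolding metric_preserving_maps_def by auto
  fix x assume x: "x \<in> S"
  obtain s where s: "s \<in> N" "dS s x < r" using net(2) x unfolding pball_def by blast
  have sS: "s \<in> S" using s net(1) by auto
  have "dT (g x) (f x) \<le> dT (g x) (g s) + dT (g s) (f s) + dT (f s) (f x)"
    using premetric_triangle[OF pm inT[OF g x] inT[OF g sS] inT[OF f x]]
      premetric_triangle[OF pm inT[OF g sS] inT[OF f sS] inT[OF f x]] by linarith
  moreover have "dT (g x) (g s) = dS s x"
    using premetric_sym[OF pm inT[OF g x] inT[OF g sS]] pres[OF g sS x] by simp
  moreover have "dT (f s) (f x) = dS s x" using pres[OF f sS x] .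
  ultimately show "dT (g x) (f x) \<le> 2 * r + \<delta>" using s close[OF s(1)] by linarith
qed

lemma premetric_dist_lt_via_centre:
  assumes "premetric X d" "t \<in> X" "a \<in> X" "b \<in> X" "d t a < r" "d t b < r"
  shows "d a b < 2 * r"
  using assms premetric_triangle[OF assms(1,3,2,4)] premetric_sym[OF assms(1,2,3)] by linarith

lemma ptotally_bounded_metric_preserving_maps:
  assumes pmT: "premetric T dT" and tbS: "ptotally_bounded S dS" and tbT: "ptotally_bounded T dT"
  shows "ptotally_bounded (metric_preserving_maps S dS T dT) (sup_dist S dT)"
  unfolding ptotally_bounded_def
proof (intro allI impI)
  let ?U = "metric_preserving_maps S dS T dT"
  fix e :: real assume "e > 0"
  then have \<epsilon>: "e / 5 > 0" by simp
  obtain NS where NS: "finite NS" "NS \<subseteq> S" "S \<subseteq> (\<Union>s\<in>NS. pball S dS s (e/5))"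
    using tbS[unfolded ptotally_bounded_def, rule_format, OF \<epsilon>] by blast
  obtain NT where NT: "finite NT" "NT \<subseteq> T" "T \<subseteq> (\<Union>t\<in>NT. pball T dT t (e/5))"
    using tbT[unfolded ptotally_bounded_def, rule_format, OF \<epsilon>] by blast
  define c where "c f = {(s, t) \<in> NS \<times> NT. dT t (f s) < e/5}" for f
  have "finite (c ` ?U)"
    by (rule finite_subset[of _ "Pow (NS \<times> NT)"]) (use NS(1) NT(1) in \<open>auto simp: c_def\<close>)
  moreover have "sup_dist S dT g f < e" if f: "f \<in> ?U" and g: "g \<in> ?U" and "c f = c g" for f g
  proof -
    have inT: "h s \<in> T" if "h \<in> ?U" "s \<in> NS" for h s
      using that NS(2) unfolding metric_preserving_maps_def by auto
    have close_on_net: "dT (g s) (f s) \<le> 2 * (e/5)" if s: "s \<in> NS" for s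
    proof -
      obtain t where t: "t \<in> NT" "dT t (f s) < e/5"
        using NT(3) inT[OF f s] unfolding pball_def by blast
      then have "(s, t) \<in> c g" using \<open>c f = c g\<close> s unfolding c_def by blast
      then have "dT t (g s) < e/5" unfolding c_def by blast
      moreover have "t \<in> T" using t NT(2) by blast
      ultimately show ?thesis
        using premetric_dist_lt_via_centre[OF pmT _ inT[OF g s] inT[OF f s]] t by fastforce
    qed
    have "sup_dist S dT g f \<le> 2 * (e/5) + 2 * (e/5)"
      using metric_preserving_sup_dist_le[OF pmT f g NS(2,3) close_on_net] \<epsilon> by simp
    then show ?thesis using \<epsilon> by linarith
  qed
  ultimately show "\<exists>F. finite F \<and> F \<subseteq> ?U \<and> ?U \<subseteq> (\<Union>f\<in>F. pball ?U (sup_dist S dT) f e)"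
    by (rule finite_net_from_finite_classification)
qed

theorem mainTheorem9:
  fixes S :: "'a set" and dS :: "'a \<Rightarrow> 'a \<Rightarrow> real"
    and T :: "'b set" and dT :: "'b \<Rightarrow> 'b \<Rightarrow> real"
  assumes "premetric S dS" and "ptotally_bounded S dS"
    and "premetric T dT" and "ptotally_bounded T dT"
  shows "premetric (metric_preserving_maps S dS T dT) (sup_dist S dT)
       \<and> ptotally_bounded (metric_preserving_maps S dS T dT) (sup_dist S dT)"
proof
  obtain B where B: "\<And>a b. a \<in> T \<Longrightarrow> b \<in> T \<Longrightarrow> dT a b \<le> B"
    using ptotally_bounded_imp_bounded[OF assms(3,4)] by blast
  have maps: "metric_preserving_maps S dS T dT \<subseteq> S \<rightarrow> T"
    unfolding metric_preserving_maps_def by auto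
  show "premetric (metric_preserving_maps S dS T dT) (sup_dist S dT)"
    using premetric_sup_dist[OF assms(3) B maps] .
  show "ptotally_bounded (metric_preserving_maps S dS T dT) (sup_dist S dT)"
    using ptotally_bounded_metric_preserving_maps[OF assms(3,2,4)] .
qed

end
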